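(* Let $\delta\in[0,1]$, let $(U,\mathcal{P})$ be an instance of MESC with $\mathcal{P}=\{P_1,\dots,P_k\}$, let $BG$ be any cover output by BiasedGreedy($\delta$), with Light set $L$ and Heavy set $H=U\setminus L$, and let $OPT$ be any cover. For $v\in U$ write $a_v=|P_{BG(v)}|$, and for $i\in[k]$ let $x_i=|OPT^{-1}(i)|$ and $y_i=|OPT^{-1}(i)\cap H|$. Then: (1) for every $i\in[k]$ and every $v\in OPT^{-1}(i)\cap L$, $a_v\ge x_i$; (2) for every $i\in[k]$, $\prod_{v\in OPT^{-1}(i)\cap H} a_v\ \ge\ y_i!$. Consequently, \[ -\frac1n\sum_{v\in U}\log_2 a_v\ \le\ Ent(OPT)-\log_2 n-\frac1n\sum_{i=1}^{k}y_i\log_2\frac{y_i}{x_i}+\frac{n-\lceil\delta n\rceil}{n}\log_2 e . \]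
   Context: Minimum Entropy Set Cover (MESC): an instance is a finite ground set $U$ with $|U|=n\ge1$ and a family $\mathcal{P}=\{P_1,\dots,P_k\}$ of subsets of $U$ with $\bigcup_i P_i=U$. A cover is a function $g:U\to[k]$ with $u\in P_{g(u)}$ for all $u\in U$. Its entropy is $Ent(g)=-\sum_{i=1}^{k}\frac{|g^{-1}(i)|}{n}\log_2\frac{|g^{-1}(i)|}{n}$ (with $0\log_2 0=0$; terms with $y_i=0$ in $\sum y_i\log_2(y_i/x_i)$ are taken as $0$). The frequency of an element $u$ is the number of indices $i$ with $u\in P_i$. Algorithm BiasedGreedy($\delta$), $\delta\in[0,1]$: let $L\subseteq U$ be a set of $\lceil\delta n\rceil$ elements of smallest frequency (ties broken arbitrarily) ("Light" elements) and $H=U\setminus L$ ("Heavy" elements). Phase 1: for every $e\in L$, set $g(e)=i_e$ where $i_e$ maximizes $|P_{i}|$ over all $i$ with $e\in P_i$. Phase 2: initialize $Q_i=P_i\setminus L$ for all $i\in[k]$; while $H\neq\emptyset$: pick any $e\in H$, set $g(e)=i_e$ where $i_e$ maximizes the current $|Q_i|$ over all $i$ with $e\in Q_i$, then delete $e$ from every $Q_i$ and from $H$. The output is the cover $g$. *)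

theory Defs
  imports Complex_Main
begin

definition mesc_instance :: "'a set \<Rightarrow> nat \<Rightarrow> (nat \<Rightarrow> 'a set) \<Rightarrow> bool" where
  "mesc_instance U k P \<longleftrightarrow> finite U \<and> U \<noteq> {} \<and> (\<forall>i\<in>{1..k}. P i \<subseteq> U)
      \<and> (\<Union>i\<in>{1..k}. P i) = U"

definition is_cover :: "'a set \<Rightarrow> nat \<Rightarrow> (nat \<Rightarrow> 'a set) \<Rightarrow> ('a \<Rightarrow> nat) \<Rightarrow> bool" where
  "is_cover U k P g \<longleftrightarrow> (\<forall>u\<in>U. g u \<in> {1..k} \<and> u \<in> P (g u))"

definition entropy :: "'a set \<Rightarrow> nat \<Rightarrow> ('a \<Rightarrow> nat) \<Rightarrow> real" where
  "entropy U k g = - (\<Sum>i\<in>{1..k}.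
      (let p = real (card {u\<in>U. g u = i}) / real (card U) in if p = 0 then 0 else p * log 2 p))"

definition freq :: "nat \<Rightarrow> (nat \<Rightarrow> 'a set) \<Rightarrow> 'a \<Rightarrow> nat" where
  "freq k P u = card {i\<in>{1..k}. u \<in> P i}"

definition light_set :: "real \<Rightarrow> 'a set \<Rightarrow> nat \<Rightarrow> (nat \<Rightarrow> 'a set) \<Rightarrow> 'a set \<Rightarrow> bool" where
  "light_set \<delta> U k P L \<longleftrightarrow> L \<subseteq> U \<and> card L = nat \<lceil>\<delta> * real (card U)\<rceil>
      \<and> (\<forall>l\<in>L. \<forall>h\<in>U - L. freq k P l \<le> freq k P h)"

text \<open>g is a possible output of BiasedGreedy(delta) in a run with Light set L.\<close>
definition biased_greedy_output ::
  "real \<Rightarrow> 'a set \<Rightarrow> nat \<Rightarrow> (nat \<Rightarrow> 'a set) \<Rightarrow> ('a \<Rightarrow> nat) \<Rightarrow> 'a set \<Rightarrow> bool" where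
  "biased_greedy_output \<delta> U k P g L \<longleftrightarrow>
     light_set \<delta> U k P L
   \<and> (\<forall>e\<in>L. g e \<in> {1..k} \<and> e \<in> P (g e)
          \<and> (\<forall>i\<in>{1..k}. e \<in> P i \<longrightarrow> card (P i) \<le> card (P (g e))))
   \<and> (\<exists>xs. distinct xs \<and> set xs = U - L \<and>
          (\<forall>j<length xs.
             (let e = xs ! j; Q = (\<lambda>i. P i - L - set (take j xs)) in
               g e \<in> {1..k} \<and> e \<in> Q (g e)
               \<and> (\<forall>i\<in>{1..k}. e \<in> Q i \<longrightarrow> card (Q i) \<le> card (Q (g e))))))"

end

theory Submission
  imports Defs
begin

(*
  Group the elements by their OPT-class C_i = OPT^-1(i).  A light element v of C_i
  was assigned a largest set containing it, so a_v >= |P_i| >= x_i.  The heavy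
  elements of C_i, listed in the order Phase 2 processes them, satisfy: when the
  r-th to last of them is processed, at least r of them are still in Q_i, so the
  greedy choice gives it a set of size >= r; hence their product of a_v is >= y_i!.
  Taking logarithms with the Stirling-type bound log(m!) >= m log m - m log e gives,
  per class, sum_{v in C_i} log a_v >= (x_i - y_i) log x_i + y_i log y_i - y_i log e;
  summing over the classes and expressing Ent(OPT) via sum_i x_i log x_i yields the
  entropy inequality, since sum_i y_i = |H| = n - ceil(delta n).
*)

text \<open>Every term of the exponential series is below its sum.\<close>
lemma power_div_fact_le_exp:
  fixes x :: real
  assumes "0 \<le> x"
  shows "x ^ m / fact m \<le> exp x"
proof -
  have "(\<Sum>i\<in>{m}. x ^ i / fact i) \<le> (\<Sum>i. x ^ i / fact i)"
    using assms summable_exp_generic[of x]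
    by (intro sum_le_suminf) (auto simp: divide_inverse ac_simps)
  then show ?thesis by (simp add: exp_def divide_inverse ac_simps)
qed

lemma log_fact_lower_bound:
  fixes b :: real
  assumes "1 < b"
  shows "real m * log b (real m) - real m * log b (exp 1) \<le> log b (fact m)"
proof (cases "m = 0")
  case False
  then have pos: "0 < real m" by simp
  have "real m ^ m \<le> exp (real m) * fact m"
    using power_div_fact_le_exp[of "real m" m] by (simp add: divide_le_eq mult.commute)
  then have "ln (real m ^ m) \<le> ln (exp (real m) * fact m)"
    using pos by (subst ln_le_cancel_iff) auto
  then have "real m * ln (real m) - real m \<le> ln (fact m)"
    using pos by (simp add: ln_mult ln_realpow)
  then show ?thesis
    using assms by (simp add: log_def divide_right_mono diff_divide_distrib[symmetric])
qed simp

text \<open>If the elements of \<open>S\<close> appear in a duplicate-free list and each element bounds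
  \<open>f\<close> from below by the number of elements of \<open>S\<close> not preceding it, then the
  product of \<open>f\<close> over \<open>S\<close> is at least \<open>|S|!\<close>: the bounds are \<open>|S|, |S|-1, \<dots>, 1\<close>.\<close>
lemma fact_card_le_prod_of_suffix_bound:
  fixes f :: "'a \<Rightarrow> nat"
  assumes "distinct xs" and "S \<subseteq> set xs"
    and "\<And>j. j < length xs \<Longrightarrow> xs ! j \<in> S \<Longrightarrow> card (S - set (take j xs)) \<le> f (xs ! j)"
  shows "fact (card S) \<le> (\<Prod>e\<in>S. f e)"
  using assms
proof (induction xs arbitrary: S)
  case Nil
  then show ?case by simp
next
  case (Cons x xs)
  define S' where "S' = S - {x}"
  have "S' \<subseteq> set xs" using Cons.prems(2) by (auto simp: S'_def)
  moreover have "card (S' - set (take j xs)) \<le> f (xs ! j)"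
    if "j < length xs" "xs ! j \<in> S'" for j
  proof -
    have "S' - set (take j xs) = S - set (take (Suc j) (x # xs))" by (auto simp: S'_def)
    then show ?thesis using Cons.prems(3)[of "Suc j"] that by (auto simp: S'_def)
  qed
  ultimately have IH: "fact (card S') \<le> (\<Prod>e\<in>S'. f e)"
    using Cons.IH Cons.prems(1) by simp
  show ?case
  proof (cases "x \<in> S")
    case False
    then show ?thesis using IH by (simp add: S'_def)
  next
    case True
    have fin: "finite S" using Cons.prems(2) finite_subset by blast
    then have card_S: "card S = Suc (card S')"
      using True by (simp add: S'_def card_Diff_singleton) (metis card_gt_0_iff empty_iff Suc_pred)
    have "card S \<le> f x" using Cons.prems(3)[of 0] True by simp
    then have "fact (card S) \<le> f x * (\<Prod>e\<in>S'. f e)"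
      unfolding card_S fact_Suc using IH by (intro mult_le_mono) simp_all
    also have "\<dots> = (\<Prod>e\<in>S. f e)" using fin True by (simp add: S'_def prod.remove)
    finally show ?thesis .
  qed
qed

lemma sum_card_fibres:
  assumes "finite A" "finite I" "g ` A \<subseteq> I"
  shows "(\<Sum>i\<in>I. card {v\<in>A. g v = i}) = card A"
  using sum.group[OF assms, of "\<lambda>_. 1::nat"] by simp

lemma entropy_eq_log_card_minus:
  assumes "finite U" "U \<noteq> {}" "g ` U \<subseteq> {1..k}"
  defines "x \<equiv> \<lambda>i. real (card {u\<in>U. g u = i})"
  shows "entropy U k g = log 2 (card U) - (1 / card U) * (\<Sum>i\<in>{1..k}. x i * log 2 (x i))"
proof -
  define n where "n = real (card U)"
  have n_pos: "0 < n" using assms(1,2) by (simp add: n_def card_gt_0_iff)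
  have sum_x: "(\<Sum>i\<in>{1..k}. x i) = n"
    using sum_card_fibres[OF assms(1) _ assms(3)] unfolding x_def n_def
    by (metis finite_atLeastAtMost of_nat_sum)
  have summand: "(let p = x i / n in if p = 0 then 0 else p * log 2 p)
      = x i / n * (log 2 (x i) - log 2 n)" for i
    using n_pos by (cases "x i = 0") (simp_all add: Let_def log_divide x_def)
  have "entropy U k g = - (\<Sum>i\<in>{1..k}. x i / n * (log 2 (x i) - log 2 n))"
    unfolding entropy_def using summand by (simp add: x_def n_def)
  also have "\<dots> = (\<Sum>i\<in>{1..k}. x i) / n * log 2 n - (1 / n) * (\<Sum>i\<in>{1..k}. x i * log 2 (x i))"
    by (simp add: sum_subtractf sum_divide_distrib sum_distrib_left sum_distrib_right algebra_simps)
  finally show ?thesis using sum_x n_pos by (simp add: n_def)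
qed

lemma biased_greedy_is_cover:
  assumes "biased_greedy_output \<delta> U k P BG L"
  shows "is_cover U k P BG"
  unfolding is_cover_def
proof
  fix v assume "v \<in> U"
  from assms obtain xs where set_xs: "set xs = U - L"
    and step: "\<forall>j<length xs. BG (xs ! j) \<in> {1..k} \<and> xs ! j \<in> P (BG (xs ! j))"
    unfolding biased_greedy_output_def by (auto simp: Let_def)
  show "BG v \<in> {1..k} \<and> v \<in> P (BG v)"
  proof (cases "v \<in> L")
    case True
    then show ?thesis using assms unfolding biased_greedy_output_def by auto
  next
    case False
    then obtain j where "j < length xs" "xs ! j = v"
      using \<open>v \<in> U\<close> set_xs by (metis Diff_iff in_set_conv_nth)
    then show ?thesis using step by auto
  qed
qed

lemma cover_card_pos:
  assumes "mesc_instance U k P" "is_cover U k P g" "v \<in> U"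
  shows "0 < card (P (g v))"
proof -
  have "g v \<in> {1..k}" "v \<in> P (g v)" using assms(2,3) unfolding is_cover_def by auto
  moreover from this have "finite (P (g v))"
    using assms(1) unfolding mesc_instance_def by (meson finite_subset)
  ultimately show ?thesis by (auto simp: card_gt_0_iff)
qed

lemma light_element_bound:
  assumes bg: "biased_greedy_output \<delta> U k P BG L" and inst: "mesc_instance U k P"
    and "v \<in> L" "i \<in> {1..k}" "v \<in> P i" "C \<subseteq> P i"
  shows "card C \<le> card (P (BG v))"
proof -
  have "finite (P i)" using inst \<open>i \<in> {1..k}\<close> unfolding mesc_instance_def
    by (meson finite_subset)
  then have "card C \<le> card (P i)" using \<open>C \<subseteq> P i\<close> by (rule card_mono)
  also have "\<dots> \<le> card (P (BG v))"
    using bg assms(3-5) unfolding biased_greedy_output_def by auto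
  finally show ?thesis .
qed

text \<open>Phase 2: heavy elements sharing a common set \<open>P_i\<close> receive sets whose sizes
  multiply to at least \<open>|S|!\<close>; when such an element is processed, all members of
  \<open>S\<close> not yet processed are still in \<open>Q_i\<close>.\<close>
lemma heavy_elements_bound:
  assumes bg: "biased_greedy_output \<delta> U k P BG L" and inst: "mesc_instance U k P"
    and i: "i \<in> {1..k}" and S: "S \<subseteq> (U - L) \<inter> P i"
  shows "fact (card S) \<le> (\<Prod>v\<in>S. card (P (BG v)))"
proof -
  have P_fin: "finite (P i')" if "i' \<in> {1..k}" for i'
    using inst that unfolding mesc_instance_def by (meson finite_subset)
  from bg obtain xs where distinct: "distinct xs" and set_xs: "set xs = U - L"
    and step: "\<And>j. j < length xs \<Longrightarrow>
        (let e = xs ! j; Q = (\<lambda>i. P i - L - set (take j xs)) in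
           BG e \<in> {1..k} \<and> e \<in> Q (BG e)
           \<and> (\<forall>i\<in>{1..k}. e \<in> Q i \<longrightarrow> card (Q i) \<le> card (Q (BG e))))"
    unfolding biased_greedy_output_def by blast
  show ?thesis
  proof (rule fact_card_le_prod_of_suffix_bound[OF distinct])
    show "S \<subseteq> set xs" using S set_xs by blast
  next
    fix j assume j: "j < length xs" and "xs ! j \<in> S"
    define e where "e = xs ! j"
    define Q where "Q i' = P i' - L - set (take j xs)" for i'
    have e_new: "e \<notin> set (take j xs)"
      using distinct id_take_nth_drop[OF j] unfolding e_def
      by (metis disjoint_insert(1) distinct_append list.set(2))
    have "e \<in> Q i" using \<open>xs ! j \<in> S\<close> S e_new by (auto simp: e_def Q_def)
    have greedy: "BG e \<in> {1..k}" "\<forall>i'\<in>{1..k}. e \<in> Q i' \<longrightarrow> card (Q i') \<le> card (Q (BG e))"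
      using step[OF j] by (simp_all add: Let_def e_def Q_def)
    have "card (S - set (take j xs)) \<le> card (Q i)"
      using S P_fin[OF i] by (intro card_mono) (auto simp: Q_def)
    also have "\<dots> \<le> card (Q (BG e))" using greedy \<open>e \<in> Q i\<close> i by blast
    also have "\<dots> \<le> card (P (BG e))"
      using P_fin[OF greedy(1)] by (intro card_mono) (auto simp: Q_def)
    finally show "card (S - set (take j xs)) \<le> card (P (BG (xs ! j)))" by (simp add: e_def)
  qed
qed

lemma card_heavy:
  assumes "light_set \<delta> U k P L" "finite U" "0 \<le> \<delta>"
  shows "real (card (U - L)) = real (card U) - real_of_int \<lceil>\<delta> * real (card U)\<rceil>"
proof -
  have L: "L \<subseteq> U" and card_L: "card L = nat \<lceil>\<delta> * real (card U)\<rceil>"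
    using assms(1) unfolding light_set_def by auto
  have "card (U - L) = card U - card L"
    using L assms(2) by (simp add: card_Diff_subset finite_subset)
  moreover have "card L \<le> card U" using L assms(2) by (rule card_mono[rotated])
  ultimately show ?thesis using card_L assms(3) by (simp add: of_nat_diff)
qed

lemma class_log_sum_bound:
  fixes f :: "'a \<Rightarrow> nat"
  assumes fin: "finite C" and pos: "\<And>v. v \<in> C \<Longrightarrow> 0 < f v"
    and light: "\<And>v. v \<in> C - H \<Longrightarrow> card C \<le> f v"
    and heavy: "fact (card (C \<inter> H)) \<le> (\<Prod>v\<in>C \<inter> H. f v)"
  defines "x \<equiv> real (card C)" and "y \<equiv> real (card (C \<inter> H))"
  shows "(x - y) * log 2 x + y * log 2 y - y * log 2 (exp 1) \<le> (\<Sum>v\<in>C. log 2 (f v))"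
proof -
  have card_light: "real (card (C - H)) = x - y"
    using card_Int_Diff[OF fin, of H] by (simp add: x_def y_def)
  have light_sum: "(x - y) * log 2 x \<le> (\<Sum>v\<in>C - H. log 2 (f v))"
    unfolding card_light[symmetric]
  proof (rule sum_bounded_below)
    fix v assume "v \<in> C - H"
    then have "0 < card C" "card C \<le> f v" using fin light by (auto simp: card_gt_0_iff)
    then show "log 2 x \<le> log 2 (f v)" by (simp add: x_def)
  qed
  have "fact (card (C \<inter> H)) \<le> (\<Prod>v\<in>C \<inter> H. real (f v))"
    using heavy by (metis of_nat_fact of_nat_le_iff of_nat_prod)
  then have "log 2 (fact (card (C \<inter> H))) \<le> log 2 (\<Prod>v\<in>C \<inter> H. real (f v))"
    by (intro log_mono) auto
  also have "\<dots> = (\<Sum>v\<in>C \<inter> H. log 2 (f v))"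
    unfolding log_def sum_divide_distrib[symmetric] using pos fin
    by (subst ln_prod) auto
  finally have heavy_sum: "y * log 2 y - y * log 2 (exp 1) \<le> (\<Sum>v\<in>C \<inter> H. log 2 (f v))"
    using log_fact_lower_bound[of 2 "card (C \<inter> H)"] by (simp add: y_def)
  show ?thesis
    using light_sum heavy_sum sum.Int_Diff[OF fin, of "\<lambda>v. log 2 (f v)" H] by simp
qed

lemma entropy_bound_from_class_bounds:
  fixes w :: "'a \<Rightarrow> real"
  assumes fin: "finite U" "U \<noteq> {}" and g: "g ` U \<subseteq> {1..k}" and H: "H \<subseteq> U"
  defines "n \<equiv> card U"
    and "x \<equiv> \<lambda>i. card {v\<in>U. g v = i}"
    and "y \<equiv> \<lambda>i. card ({v\<in>U. g v = i} \<inter> H)"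
  assumes class_bound: "\<And>i. i \<in> {1..k} \<Longrightarrow>
      (real (x i) - real (y i)) * log 2 (x i) + y i * log 2 (y i) - y i * log 2 (exp 1)
        \<le> (\<Sum>v\<in>{v\<in>U. g v = i}. w v)"
  shows "- (1 / real n) * (\<Sum>v\<in>U. w v)
           \<le> entropy U k g - log 2 (real n)
              - (1 / real n) * (\<Sum>i\<in>{1..k}. if y i = 0 then 0
                                   else real (y i) * log 2 (real (y i) / real (x i)))
              + real (card H) / real n * log 2 (exp 1)"
proof -
  define X where "X i = real (x i) * log 2 (x i)" for i
  define T where "T i = (if y i = 0 then 0 else real (y i) * log 2 (real (y i) / real (x i)))" for i
  define c where "c = log 2 (exp 1)"
  have n_pos: "0 < real n" using fin by (simp add: n_def card_gt_0_iff)
  have "(real (x i) - real (y i)) * log 2 (x i) + y i * log 2 (y i) = X i + T i" for i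
  proof (cases "y i = 0")
    case False
    have "y i \<le> x i" unfolding x_def y_def using fin(1) by (intro card_mono) auto
    then show ?thesis using False by (simp add: X_def T_def log_divide algebra_simps)
  qed (simp add: X_def T_def)
  then have "(\<Sum>i\<in>{1..k}. X i + T i - y i * c) \<le> (\<Sum>i\<in>{1..k}. \<Sum>v\<in>{v\<in>U. g v = i}. w v)"
    using class_bound by (intro sum_mono) (simp add: c_def)
  also have "\<dots> = (\<Sum>v\<in>U. w v)" using sum.group[OF fin(1) _ g, of w] by simp
  finally have sum_bound: "(\<Sum>i\<in>{1..k}. X i + T i - y i * c) \<le> (\<Sum>v\<in>U. w v)" .
  have "g ` H \<subseteq> {1..k}" using g H by blast
  then have "(\<Sum>i\<in>{1..k}. card {v\<in>H. g v = i}) = card H"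
    using sum_card_fibres finite_subset[OF H fin(1)] by blast
  moreover have "{v\<in>H. g v = i} = {v\<in>U. g v = i} \<inter> H" for i using H by blast
  ultimately have "(\<Sum>i\<in>{1..k}. y i) = card H" by (simp add: y_def)
  then have "(\<Sum>i\<in>{1..k}. X i + T i - y i * c) = (\<Sum>i\<in>{1..k}. X i) + (\<Sum>i\<in>{1..k}. T i) - card H * c"
    by (simp add: sum.distrib sum_subtractf flip: sum_distrib_right of_nat_sum)
  with sum_bound have "(\<Sum>i\<in>{1..k}. X i) + (\<Sum>i\<in>{1..k}. T i) - card H * c \<le> (\<Sum>v\<in>U. w v)" by simp
  then have "- (1 / real n) * (\<Sum>v\<in>U. w v)
      \<le> - (1 / real n) * ((\<Sum>i\<in>{1..k}. X i) + (\<Sum>i\<in>{1..k}. T i) - card H * c)"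
    using n_pos by (simp add: divide_le_cancel)
  moreover have "entropy U k g = log 2 n - (1 / n) * (\<Sum>i\<in>{1..k}. X i)"
    using entropy_eq_log_card_minus[OF fin g] by (simp add: X_def x_def n_def)
  ultimately show ?thesis
    by (simp add: T_def c_def algebra_simps add_divide_distrib diff_divide_distrib)
qed

theorem mainTheorem4:
  fixes U :: "'a set" and k :: nat and P :: "nat \<Rightarrow> 'a set"
    and \<delta> :: real and BG OPT :: "'a \<Rightarrow> nat" and L :: "'a set"
  assumes inst: "mesc_instance U k P"
    and delta: "0 \<le> \<delta>" "\<delta> \<le> 1"
    and bg: "biased_greedy_output \<delta> U k P BG L"
    and opt: "is_cover U k P OPT"
  defines "n \<equiv> card U"
    and "a \<equiv> (\<lambda>v. card (P (BG v)))"
    and "x \<equiv> (\<lambda>i. card {v\<in>U. OPT v = i})"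
    and "y \<equiv> (\<lambda>i. card ({v\<in>U. OPT v = i} \<inter> (U - L)))"
  shows "(\<forall>i\<in>{1..k}. \<forall>v\<in>{v\<in>U. OPT v = i} \<inter> L. a v \<ge> x i)
       \<and> (\<forall>i\<in>{1..k}. (\<Prod>v\<in>{v\<in>U. OPT v = i} \<inter> (U - L). a v) \<ge> fact (y i))
       \<and> - (1 / real n) * (\<Sum>v\<in>U. log 2 (real (a v)))
           \<le> entropy U k OPT - log 2 (real n)
              - (1 / real n) * (\<Sum>i\<in>{1..k}. if y i = 0 then 0
                                   else real (y i) * log 2 (real (y i) / real (x i)))
              + (real n - real_of_int \<lceil>\<delta> * real n\<rceil>) / real n * log 2 (exp 1)"
proof -
  define C where "C i = {v\<in>U. OPT v = i}" for i
  have fin: "finite U" "U \<noteq> {}" using inst unfolding mesc_instance_def by auto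
  have C_sub: "C i \<subseteq> P i" "C i \<subseteq> U" for i using opt unfolding is_cover_def C_def by auto
  have OPT_range: "OPT ` U \<subseteq> {1..k}" using opt unfolding is_cover_def by auto
  have light: "x i \<le> a v" if "i \<in> {1..k}" "v \<in> C i \<inter> L" for i v
    using light_element_bound[OF bg inst _ that(1) _ C_sub(1)] that C_sub(1)
    unfolding a_def x_def C_def by blast
  have heavy: "fact (y i) \<le> (\<Prod>v\<in>C i \<inter> (U - L). a v)" if "i \<in> {1..k}" for i
    using heavy_elements_bound[OF bg inst that, of "C i \<inter> (U - L)"] C_sub(1)
    unfolding a_def y_def C_def by blast
  have a_pos: "0 < a v" if "v \<in> U" for v
    using cover_card_pos[OF inst biased_greedy_is_cover[OF bg] that] by (simp add: a_def)
  have class_bound: "(real (x i) - real (y i)) * log 2 (x i) + y i * log 2 (y i) - y i * log 2 (exp 1)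
        \<le> (\<Sum>v\<in>C i. log 2 (a v))" if "i \<in> {1..k}" for i
  proof -
    have "v \<in> C i \<inter> L" if "v \<in> C i - (U - L)" for v using that C_sub(2) by blast
    then show ?thesis
      using class_log_sum_bound[of "C i" a "U - L"] light[OF that] heavy[OF that]
        finite_subset[OF C_sub(2) fin(1)] a_pos C_sub(2)
      unfolding x_def y_def C_def by blast
  qed
  have card_H: "real (card (U - L)) = real n - real_of_int \<lceil>\<delta> * real n\<rceil>"
    using card_heavy bg fin(1) delta(1) unfolding biased_greedy_output_def n_def by blast
  have "- (1 / real n) * (\<Sum>v\<in>U. log 2 (real (a v)))
           \<le> entropy U k OPT - log 2 (real n)
              - (1 / real n) * (\<Sum>i\<in>{1..k}. if y i = 0 then 0
                                   else real (y i) * log 2 (real (y i) / real (x i)))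
              + real (card (U - L)) / real n * log 2 (exp 1)"
    using entropy_bound_from_class_bounds[OF fin OPT_range Diff_subset, where w = "\<lambda>v. log 2 (a v)"]
      class_bound unfolding n_def x_def y_def C_def by blast
  then show ?thesis using light heavy card_H unfolding C_def by auto
qed

end
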